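(* Let $Z_\pm,Y_\pm,R_0,R_1,f_{20},f_{10}$ be real numbers with $f_{20}\ne1$, $Z_-\le Z_+$, $Y_-\le Y_+$, and $0\le f_{20}(R_1-R_0)$ if $f_{20}\ne0$, resp. $0\le -f_{10}$ if $f_{20}=0$. Define $p_Z(x):=(x-Z_+)(x-Z_-)$, $p_Y(x):=(1-f_{20})(x-Y_+)(x-Y_-)$, and $p_R(x):=f_{20}(x-R_0)(x-R_1)$ if $f_{20}\ne0$, $p_R(x):=f_{10}(x-R_0)$ if $f_{20}=0$. (i) $p_Z-p_Y=p_R$ if and only if $Z_+Z_-+(f_{20}-1)Y_+Y_-$ equals $f_{20}R_0R_1$ (if $f_{20}\ne0$) resp. $-f_{10}R_0$ (if $f_{20}=0$), and $(Z_++Z_-)+(f_{20}-1)(Y_++Y_-)$ equals $f_{20}(R_0+R_1)$ (if $f_{20}\ne0$) resp. $-f_{10}$ (if $f_{20}=0$). (ii) If $p_Z-p_Y=p_R$ and $Y_-\le Z_-\le Y_+$ and $Y_-\le R_0\le Y_+$, then one of the following scenarios occurs, and within each scenario the four listed conditions (a),(b),(c),(d) are equivalent for the given range of $f_{20}$: 1a ($f_{20}=0$): (a) $Y_\pm=Z_\pm$; (b) $p_R\equiv0$; (c) $p_R\equiv0$; (d) $Y_\pm=Z_\pm$ and $p_R\equiv0$. 1b ($f_{20}=0$): (a) $Y_-\le Z_-\le Y_+\le Z_+$ and ($Y_+<Z_+$ or $Y_-<Z_-$); (b) $Y_-\le R_0\le Y_+$ and $f_{10}<0$; (c) $Z_-\le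 R_0\le Z_+$ and $f_{10}<0$; (d) $Y_-\le Z_-\le R_0\le Y_+\le Z_+$ and $f_{10}<0$. 2 ($f_{20}<0$): (a) $Y_-\le Z_-\le Y_+\le Z_+$; (b) $R_1\le Y_-\le R_0\le Y_+$; (c) $R_1\le Z_-\le R_0\le Z_+$; (d) $R_1\le Y_-\le Z_-\le R_0\le Y_+\le Z_+$. 3a ($0<f_{20}<1$): (a) $Y_-\le Z_-\le Y_+\le Z_+$; (b) $Y_-\le R_0\le Y_+\le R_1$; (c) $Z_-\le R_0\le Z_+\le R_1$; (d) $Y_-\le Z_-\le R_0\le Y_+\le Z_+\le R_1$. 3b ($f_{20}>1$): (a) $Y_-\le Z_-\le Y_+\le Z_+$; (b) $Y_-\le R_0\le Y_+\le R_1$; (c) $R_0\le Z_-\le R_1\le Z_+$; (d) $Y_-\le R_0\le Z_-\le Y_+\le R_1\le Z_+$. 4a ($0<f_{20}<1$): (a) $Y_-\le Z_-\le Z_+<Y_+$; (b) $Y_-\le R_0\le R_1<Y_+$; (c) $Z_-\le R_0\le R_1<Z_+$; (d) $Y_-\le Z_-\le R_0\le R_1<Z_+<Y_+$. 4b ($f_{20}>1$): (a) $Y_-\le Z_-\le Z_+<Y_+$; (b) $Y_-\le R_0\le R_1<Y_+$; (c) $R_0\le Z_-\le Z_+<R_1$; (d) $Y_-\le R_0\le Z_-\le Z_+<R_1<Y_+$.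
   Context: When $f_{20}=0$ the number $R_1$ plays no role. The scenarios are mutually disjoint. *)

theory Defs
  imports Main "HOL.Real"
begin

definition pZ :: "real \<Rightarrow> real \<Rightarrow> real \<Rightarrow> real" where
  "pZ Zp Zm x = (x - Zp) * (x - Zm)"

definition pY :: "real \<Rightarrow> real \<Rightarrow> real \<Rightarrow> real \<Rightarrow> real" where
  "pY f20 Yp Ym x = (1 - f20) * (x - Yp) * (x - Ym)"

definition pR :: "real \<Rightarrow> real \<Rightarrow> real \<Rightarrow> real \<Rightarrow> real \<Rightarrow> real" where
  "pR f20 f10 R0 R1 x = (if f20 \<noteq> 0 then f20 * (x - R0) * (x - R1) else f10 * (x - R0))"

datatype scenario = S1a | S1b | S2 | S3a | S3b | S4a | S4b

fun scen_range :: "scenario \<Rightarrow> real \<Rightarrow> bool" where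
  "scen_range S1a f20 = (f20 = 0)"
| "scen_range S1b f20 = (f20 = 0)"
| "scen_range S2 f20 = (f20 < 0)"
| "scen_range S3a f20 = (0 < f20 \<and> f20 < 1)"
| "scen_range S3b f20 = (f20 > 1)"
| "scen_range S4a f20 = (0 < f20 \<and> f20 < 1)"
| "scen_range S4b f20 = (f20 > 1)"

fun cond_a :: "scenario \<Rightarrow> real \<Rightarrow> real \<Rightarrow> real \<Rightarrow> real \<Rightarrow> bool" where
  "cond_a S1a Zp Zm Yp Ym = (Yp = Zp \<and> Ym = Zm)"
| "cond_a S1b Zp Zm Yp Ym = (Ym \<le> Zm \<and> Zm \<le> Yp \<and> Yp \<le> Zp \<and> (Yp < Zp \<or> Ym < Zm))"
| "cond_a S2 Zp Zm Yp Ym = (Ym \<le> Zm \<and> Zm \<le> Yp \<and> Yp \<le> Zp)"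
| "cond_a S3a Zp Zm Yp Ym = (Ym \<le> Zm \<and> Zm \<le> Yp \<and> Yp \<le> Zp)"
| "cond_a S3b Zp Zm Yp Ym = (Ym \<le> Zm \<and> Zm \<le> Yp \<and> Yp \<le> Zp)"
| "cond_a S4a Zp Zm Yp Ym = (Ym \<le> Zm \<and> Zm \<le> Zp \<and> Zp < Yp)"
| "cond_a S4b Zp Zm Yp Ym = (Ym \<le> Zm \<and> Zm \<le> Zp \<and> Zp < Yp)"

fun cond_b :: "scenario \<Rightarrow> real \<Rightarrow> real \<Rightarrow> real \<Rightarrow> real \<Rightarrow> real \<Rightarrow> real \<Rightarrow> bool" where
  "cond_b S1a f20 f10 Yp Ym R0 R1 = (pR f20 f10 R0 R1 = (\<lambda>x. 0))"
| "cond_b S1b f20 f10 Yp Ym R0 R1 = (Ym \<le> R0 \<and> R0 \<le> Yp \<and> f10 < 0)"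
| "cond_b S2 f20 f10 Yp Ym R0 R1 = (R1 \<le> Ym \<and> Ym \<le> R0 \<and> R0 \<le> Yp)"
| "cond_b S3a f20 f10 Yp Ym R0 R1 = (Ym \<le> R0 \<and> R0 \<le> Yp \<and> Yp \<le> R1)"
| "cond_b S3b f20 f10 Yp Ym R0 R1 = (Ym \<le> R0 \<and> R0 \<le> Yp \<and> Yp \<le> R1)"
| "cond_b S4a f20 f10 Yp Ym R0 R1 = (Ym \<le> R0 \<and> R0 \<le> R1 \<and> R1 < Yp)"
| "cond_b S4b f20 f10 Yp Ym R0 R1 = (Ym \<le> R0 \<and> R0 \<le> R1 \<and> R1 < Yp)"

fun cond_c :: "scenario \<Rightarrow> real \<Rightarrow> real \<Rightarrow> real \<Rightarrow> real \<Rightarrow> real \<Rightarrow> real \<Rightarrow> bool" where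
  "cond_c S1a f20 f10 Zp Zm R0 R1 = (pR f20 f10 R0 R1 = (\<lambda>x. 0))"
| "cond_c S1b f20 f10 Zp Zm R0 R1 = (Zm \<le> R0 \<and> R0 \<le> Zp \<and> f10 < 0)"
| "cond_c S2 f20 f10 Zp Zm R0 R1 = (R1 \<le> Zm \<and> Zm \<le> R0 \<and> R0 \<le> Zp)"
| "cond_c S3a f20 f10 Zp Zm R0 R1 = (Zm \<le> R0 \<and> R0 \<le> Zp \<and> Zp \<le> R1)"
| "cond_c S3b f20 f10 Zp Zm R0 R1 = (R0 \<le> Zm \<and> Zm \<le> R1 \<and> R1 \<le> Zp)"
| "cond_c S4a f20 f10 Zp Zm R0 R1 = (Zm \<le> R0 \<and> R0 \<le> R1 \<and> R1 < Zp)"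
| "cond_c S4b f20 f10 Zp Zm R0 R1 = (R0 \<le> Zm \<and> Zm \<le> Zp \<and> Zp < R1)"

fun cond_d :: "scenario \<Rightarrow> real \<Rightarrow> real \<Rightarrow> real \<Rightarrow> real \<Rightarrow> real \<Rightarrow> real \<Rightarrow> real \<Rightarrow> real \<Rightarrow> bool" where
  "cond_d S1a f20 f10 Zp Zm Yp Ym R0 R1 =
     (Yp = Zp \<and> Ym = Zm \<and> pR f20 f10 R0 R1 = (\<lambda>x. 0))"
| "cond_d S1b f20 f10 Zp Zm Yp Ym R0 R1 =
     (Ym \<le> Zm \<and> Zm \<le> R0 \<and> R0 \<le> Yp \<and> Yp \<le> Zp \<and> f10 < 0)"
| "cond_d S2 f20 f10 Zp Zm Yp Ym R0 R1 =
     (R1 \<le> Ym \<and> Ym \<le> Zm \<and> Zm \<le> R0 \<and> R0 \<le> Yp \<and> Yp \<le> Zp)"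
| "cond_d S3a f20 f10 Zp Zm Yp Ym R0 R1 =
     (Ym \<le> Zm \<and> Zm \<le> R0 \<and> R0 \<le> Yp \<and> Yp \<le> Zp \<and> Zp \<le> R1)"
| "cond_d S3b f20 f10 Zp Zm Yp Ym R0 R1 =
     (Ym \<le> R0 \<and> R0 \<le> Zm \<and> Zm \<le> Yp \<and> Yp \<le> R1 \<and> R1 \<le> Zp)"
| "cond_d S4a f20 f10 Zp Zm Yp Ym R0 R1 =
     (Ym \<le> Zm \<and> Zm \<le> R0 \<and> R0 \<le> R1 \<and> R1 < Zp \<and> Zp < Yp)"
| "cond_d S4b f20 f10 Zp Zm Yp Ym R0 R1 =
     (Ym \<le> R0 \<and> R0 \<le> Zm \<and> Zm \<le> Zp \<and> Zp < R1 \<and> R1 < Yp)"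

end

theory Submission
  imports Defs
begin

text \<open>
  Evaluating the identity \<open>p\<^sub>Z - p\<^sub>Y = p\<^sub>R\<close> at a root of one of the three quadratics
  removes that quadratic and compares the signs of the other two at this point, and
  \<open>(x - a) * (x - b)\<close> with \<open>a \<le> b\<close> is nonpositive exactly on \<open>[a, b]\<close>. Doing this at the
  points \<open>Y\<^sub>\<plusminus>, Z\<^sub>\<plusminus>, R\<^sub>0, R\<^sub>1\<close> turns the hypotheses \<open>Z\<^sub>-, R\<^sub>0 \<in> [Y\<^sub>-, Y\<^sub>+]\<close> into the full chain
  of inequalities (d) of one scenario, and (d) implies (a), (b), (c) and excludes the other
  scenario with the same range of \<open>f\<^sub>2\<^sub>0\<close>. A strict inequality can only degenerate if all
  roots except \<open>Y\<^sub>+\<close> coincide, and then the identity at \<open>Y\<^sub>+\<close> forces \<open>f\<^sub>2\<^sub>0 = 1\<close>. For \<open>f\<^sub>2\<^sub>0 = 0\<close> the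
  linear coefficient \<open>(Z\<^sub>+ + Z\<^sub>-) - (Y\<^sub>+ + Y\<^sub>-) = -f\<^sub>1\<^sub>0\<close> separates scenarios 1a and 1b.
\<close>

lemma between_iff_mult_diff_nonpos:
  fixes x a b :: "'a::linordered_idom"
  assumes "a \<le> b"
  shows "(x - b) * (x - a) \<le> 0 \<longleftrightarrow> a \<le> x \<and> x \<le> b"
  using assms by (auto simp: mult_le_0_iff)

lemma mult_le_0_iff_pos_left:
  fixes c a :: "'a::linordered_idom"
  shows "0 < c \<Longrightarrow> c * a \<le> 0 \<longleftrightarrow> a \<le> 0"
  by (auto simp: mult_le_0_iff)

lemma quadratic_eq_iff_coeffs:
  fixes a b c a' b' c' :: "'a::field_char_0"
  shows "(\<forall>x. a * x^2 + b * x + c = a' * x^2 + b' * x + c') \<longleftrightarrow> a = a' \<and> b = b' \<and> c = c'"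
proof
  assume eq: "\<forall>x. a * x^2 + b * x + c = a' * x^2 + b' * x + c'"
  have c: "c = c'"
    using eq[rule_format, of 0] by simp
  have sum: "a + b = a' + b'"
    using eq[rule_format, of 1] c by simp
  have diff: "a - b = a' - b'"
    using eq[rule_format, of "-1"] c by simp
  show "a = a' \<and> b = b' \<and> c = c'"
  proof -
    have "a + a = (a + b) + (a - b)"
      by simp
    also have "\<dots> = a' + a'"
      unfolding sum diff by simp
    finally have "a = a'"
      by (simp flip: mult_2)
    with sum c show ?thesis
      by simp
  qed
qed simp

lemma pZ_minus_pY_eq:
  "pZ Zp Zm x - pY f Yp Ym x
     = f * x^2 - ((Zp + Zm) + (f - 1) * (Yp + Ym)) * x + (Zp * Zm + (f - 1) * Yp * Ym)"
  by (simp add: pZ_def pY_def power2_eq_square algebra_simps)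

lemma pR_eq:
  "pR f f10 R0 R1 x
     = f * x^2 - (if f \<noteq> 0 then f * (R0 + R1) else - f10) * x
         + (if f \<noteq> 0 then f * R0 * R1 else - f10 * R0)"
  by (simp add: pR_def power2_eq_square algebra_simps)

lemma pZ_minus_pY_eq_pR_iff:
  "(\<lambda>x. pZ Zp Zm x - pY f Yp Ym x) = pR f f10 R0 R1 \<longleftrightarrow>
     (Zp * Zm + (f - 1) * Yp * Ym = (if f \<noteq> 0 then f * R0 * R1 else - f10 * R0) \<and>
      (Zp + Zm) + (f - 1) * (Yp + Ym) = (if f \<noteq> 0 then f * (R0 + R1) else - f10))"
  unfolding fun_eq_iff pZ_minus_pY_eq pR_eq
  unfolding diff_conv_add_uminus mult_minus_left[symmetric] quadratic_eq_iff_coeffs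
  by (simp only: neg_equal_iff_equal simp_thms conj_commute)

lemma pR_zero_eq_zero_iff: "pR 0 f10 R0 R1 = (\<lambda>x. 0) \<longleftrightarrow> f10 = 0"
  by (auto simp: fun_eq_iff pR_def dest: spec[of _ "R0 + 1"])

definition scenario_classification ::
  "real \<Rightarrow> real \<Rightarrow> real \<Rightarrow> real \<Rightarrow> real \<Rightarrow> real \<Rightarrow> real \<Rightarrow> real \<Rightarrow> bool" where
  "scenario_classification f20 f10 Zp Zm Yp Ym R0 R1 \<longleftrightarrow>
     (\<exists>s. scen_range s f20 \<and> cond_a s Zp Zm Yp Ym) \<and>
     (\<forall>s. scen_range s f20 \<longrightarrow>
        (cond_a s Zp Zm Yp Ym \<longleftrightarrow> cond_b s f20 f10 Yp Ym R0 R1) \<and>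
        (cond_a s Zp Zm Yp Ym \<longleftrightarrow> cond_c s f20 f10 Zp Zm R0 R1) \<and>
        (cond_a s Zp Zm Yp Ym \<longleftrightarrow> cond_d s f20 f10 Zp Zm Yp Ym R0 R1))"

lemma all_scenario_iff:
  "(\<forall>s. P s) \<longleftrightarrow> P S1a \<and> P S1b \<and> P S2 \<and> P S3a \<and> P S3b \<and> P S4a \<and> P S4b"
  by (metis scenario.exhaust)

lemma ex_scenario_iff:
  "(\<exists>s. P s) \<longleftrightarrow> P S1a \<or> P S1b \<or> P S2 \<or> P S3a \<or> P S3b \<or> P S4a \<or> P S4b"
  by (metis scenario.exhaust)

lemma scenario_classification_if_cond_d:
  assumes "f \<noteq> 0" and "scen_range t f" and "cond_d t f f10 Zp Zm Yp Ym R0 R1"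
  shows "scenario_classification f f10 Zp Zm Yp Ym R0 R1"
  using assms unfolding scenario_classification_def all_scenario_iff ex_scenario_iff by (cases t) auto

context
  fixes Zp Zm Yp Ym R0 R1 :: real
  assumes Zm_le_Zp: "Zm \<le> Zp" and Ym_le_Zm: "Ym \<le> Zm" and Zm_le_Yp: "Zm \<le> Yp"
    and Ym_le_R0: "Ym \<le> R0" and R0_le_Yp: "R0 \<le> Yp"
begin

lemma between_Z_if_between_Y:
  assumes "f < 1" and "Ym \<le> x" and "x \<le> Yp"
    and "(x - Zp) * (x - Zm) = (1 - f) * ((x - Yp) * (x - Ym))"
  shows "Zm \<le> x \<and> x \<le> Zp"
proof -
  note assms(4)
  also have "\<dots> \<le> 0"
    using assms(1-3) by (intro mult_nonneg_nonpos mult_nonpos_nonneg) auto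
  finally show ?thesis
    using Zm_le_Zp by (simp add: between_iff_mult_diff_nonpos)
qed

lemma Yp_le_Zp_if_nonpos:
  assumes "(Yp - Zp) * (Yp - Zm) \<le> 0"
  shows "Yp \<le> Zp"
  using assms Zm_le_Zp by (simp add: between_iff_mult_diff_nonpos)

lemma scenario_classification_zero:
  assumes g: "g \<le> 0"
    and identity: "\<And>x. (x - Zp) * (x - Zm) - (x - Yp) * (x - Ym) = g * (x - R0)"
  shows "scenario_classification 0 g Zp Zm Yp Ym R0 R1"
proof -
  have sum: "(Zp + Zm) - (Yp + Ym) = - g"
    using identity[of 0] identity[of 1] by (simp add: algebra_simps)
  show ?thesis
  proof (cases "g = 0")
    case True
    have "(Zp - Yp) * (Zp - Ym) = 0"
      using identity[of Zp] True by (simp add: algebra_simps)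
    then have "Yp = Zp \<and> Ym = Zm"
      using sum True Ym_le_Zm Zm_le_Zp Zm_le_Yp by auto
    then show ?thesis
      using True unfolding scenario_classification_def all_scenario_iff ex_scenario_iff
      by (auto simp: pR_zero_eq_zero_iff)
  next
    case False
    then have "g < 0"
      using g by simp
    have "(Yp - Zp) * (Yp - Zm) = g * (Yp - R0)"
      using identity[of Yp] by (simp add: algebra_simps)
    also have "\<dots> \<le> 0"
      using \<open>g < 0\<close> R0_le_Yp by (simp add: mult_nonpos_nonneg)
    finally have "Yp \<le> Zp"
      by (rule Yp_le_Zp_if_nonpos)
    moreover have "Zm \<le> R0 \<and> R0 \<le> Zp"
      using identity[of R0] Ym_le_R0 R0_le_Yp
      by (intro between_Z_if_between_Y[where f = 0]) (simp_all add: algebra_simps)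
    ultimately show ?thesis
      using \<open>g < 0\<close> sum Ym_le_Zm Zm_le_Yp Ym_le_R0 R0_le_Yp
      unfolding scenario_classification_def all_scenario_iff ex_scenario_iff
      by (auto simp: pR_zero_eq_zero_iff)
  qed
qed

context
  fixes f :: real
  assumes identity:
    "\<And>x. (x - Zp) * (x - Zm) - (1 - f) * (x - Yp) * (x - Ym) = f * (x - R0) * (x - R1)"
begin

lemma R0_between_Z:
  assumes "f < 1"
  shows "Zm \<le> R0 \<and> R0 \<le> Zp"
  using identity[of R0] assms Ym_le_R0 R0_le_Yp
  by (intro between_Z_if_between_Y) (simp_all add: algebra_simps)

lemma Yp_le_Zp_iff_Yp_le_R1:
  assumes "0 < f" and "R0 \<le> R1"
  shows "Yp \<le> Zp \<longleftrightarrow> Yp \<le> R1"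
proof -
  have "(Yp - Zp) * (Yp - Zm) = f * ((Yp - R1) * (Yp - R0))"
    using identity[of Yp] by (simp add: algebra_simps)
  then have "(Yp - Zp) * (Yp - Zm) \<le> 0 \<longleftrightarrow> (Yp - R1) * (Yp - R0) \<le> 0"
    using assms(1) by (simp add: mult_le_0_iff_pos_left)
  then show ?thesis
    using assms(2) Zm_le_Zp Zm_le_Yp R0_le_Yp by (simp add: between_iff_mult_diff_nonpos)
qed

lemma collapsed_roots_impossible:
  assumes "f \<noteq> 1" and "Zp < Yp" and "Zp = Ym" and "R0 = Ym" and "R1 = Ym"
  shows False
proof -
  have "Zm = Ym"
    using assms(3) Ym_le_Zm Zm_le_Zp by simp
  then have "(Yp - Ym) * (Yp - Ym) = f * ((Yp - Ym) * (Yp - Ym))"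
    using identity[of Yp] assms(3-5) by (simp add: algebra_simps)
  then show False
    using assms(1-3) by simp
qed

lemma cond_d_S2_if_neg:
  assumes f: "f < 0" and R1_le_R0: "R1 \<le> R0"
  shows "cond_d S2 f f10 Zp Zm Yp Ym R0 R1"
proof -
  have "(Yp - Zp) * (Yp - Zm) = f * ((Yp - R0) * (Yp - R1))"
    using identity[of Yp] by (simp add: algebra_simps)
  also have "\<dots> \<le> 0"
    using f R1_le_R0 R0_le_Yp by (simp add: mult_nonpos_nonneg)
  finally have "Yp \<le> Zp"
    by (rule Yp_le_Zp_if_nonpos)
  moreover have "R1 \<le> Ym"
  proof -
    have "0 \<le> (Ym - Zp) * (Ym - Zm)"
      using Ym_le_Zm Zm_le_Zp by (simp add: mult_nonpos_nonpos)
    also have "\<dots> = f * ((Ym - R0) * (Ym - R1))"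
      using identity[of Ym] by (simp add: algebra_simps)
    finally have "(Ym - R0) * (Ym - R1) \<le> 0"
      using f by (simp add: zero_le_mult_iff)
    then show ?thesis
      using R1_le_R0 by (simp add: between_iff_mult_diff_nonpos)
  qed
  ultimately show ?thesis
    using R0_between_Z f Ym_le_Zm R0_le_Yp by simp
qed

lemma cond_d_S3a_if_Yp_le_Zp:
  assumes f: "0 < f" "f < 1" and R0_le_R1: "R0 \<le> R1" and "Yp \<le> Zp"
  shows "cond_d S3a f f10 Zp Zm Yp Ym R0 R1"
proof -
  have "f * ((Zp - R1) * (Zp - R0)) = (f - 1) * ((Zp - Yp) * (Zp - Ym))"
    using identity[of Zp] by (simp add: algebra_simps)
  also have "\<dots> \<le> 0"
    using \<open>Yp \<le> Zp\<close> f Ym_le_Zm Zm_le_Zp by (intro mult_nonpos_nonneg) auto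
  finally have "Zp \<le> R1"
    using f R0_le_R1 by (simp add: mult_le_0_iff_pos_left between_iff_mult_diff_nonpos)
  then show ?thesis
    using \<open>Yp \<le> Zp\<close> R0_between_Z f Ym_le_Zm R0_le_Yp by simp
qed

lemma cond_d_S4a_if_Zp_lt_Yp:
  assumes f: "0 < f" "f < 1" and R0_le_R1: "R0 \<le> R1" and "Zp < Yp"
  shows "cond_d S4a f f10 Zp Zm Yp Ym R0 R1"
proof -
  have "R1 < Yp"
    using Yp_le_Zp_iff_Yp_le_R1 f(1) R0_le_R1 \<open>Zp < Yp\<close> by simp
  have at_R1: "(R1 - Zp) * (R1 - Zm) = (1 - f) * ((R1 - Yp) * (R1 - Ym))"
    using identity[of R1] by (simp add: algebra_simps)
  then have "R1 \<le> Zp"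
    using between_Z_if_between_Y[OF f(2)] \<open>R1 < Yp\<close> Ym_le_R0 R0_le_R1 by simp
  moreover have "R1 \<noteq> Zp"
  proof
    assume "R1 = Zp"
    then have "R1 = Ym"
      using at_R1 f(2) \<open>R1 < Yp\<close> by simp
    then show False
      using collapsed_roots_impossible \<open>R1 = Zp\<close> \<open>Zp < Yp\<close> f(2) Ym_le_R0 R0_le_R1 by simp
  qed
  ultimately show ?thesis
    using \<open>Zp < Yp\<close> R0_between_Z f(2) R0_le_R1 Ym_le_Zm by simp
qed

lemma Zm_between_R:
  assumes "1 < f" and "R0 \<le> R1"
  shows "R0 \<le> Zm \<and> Zm \<le> R1"
proof -
  have "f * ((Zm - R1) * (Zm - R0)) = (f - 1) * ((Zm - Yp) * (Zm - Ym))"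
    using identity[of Zm] by (simp add: algebra_simps)
  also have "\<dots> \<le> 0"
    using assms(1) Ym_le_Zm Zm_le_Yp by (intro mult_nonneg_nonpos mult_nonpos_nonneg) auto
  finally show ?thesis
    using assms by (simp add: mult_le_0_iff_pos_left between_iff_mult_diff_nonpos)
qed

lemma cond_d_S3b_if_Yp_le_Zp:
  assumes f: "1 < f" and R0_le_R1: "R0 \<le> R1" and "Yp \<le> Zp"
  shows "cond_d S3b f f10 Zp Zm Yp Ym R0 R1"
proof -
  have "Yp \<le> R1"
    using Yp_le_Zp_iff_Yp_le_R1 f R0_le_R1 \<open>Yp \<le> Zp\<close> by simp
  have "(R1 - Zp) * (R1 - Zm) = (1 - f) * ((R1 - Yp) * (R1 - Ym))"
    using identity[of R1] by (simp add: algebra_simps)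
  also have "\<dots> \<le> 0"
    using f \<open>Yp \<le> R1\<close> R0_le_Yp Ym_le_R0 by (intro mult_nonpos_nonneg) auto
  finally have "R1 \<le> Zp"
    using Zm_le_Zp by (simp add: between_iff_mult_diff_nonpos)
  then show ?thesis
    using \<open>Yp \<le> Zp\<close> \<open>Yp \<le> R1\<close> Zm_between_R f R0_le_R1 Ym_le_R0 Zm_le_Yp by simp
qed

lemma cond_d_S4b_if_Zp_lt_Yp:
  assumes f: "1 < f" and R0_le_R1: "R0 \<le> R1" and "Zp < Yp"
  shows "cond_d S4b f f10 Zp Zm Yp Ym R0 R1"
proof -
  have at_Zp: "f * ((Zp - R1) * (Zp - R0)) = (f - 1) * ((Zp - Yp) * (Zp - Ym))"
    using identity[of Zp] by (simp add: algebra_simps)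
  also have "\<dots> \<le> 0"
    using f \<open>Zp < Yp\<close> Ym_le_Zm Zm_le_Zp by (intro mult_nonneg_nonpos mult_nonpos_nonneg) auto
  finally have "Zp \<le> R1"
    using f R0_le_R1 by (simp add: mult_le_0_iff_pos_left between_iff_mult_diff_nonpos)
  moreover have "Zp \<noteq> R1"
  proof
    assume "Zp = R1"
    then have "Zp = Ym"
      using at_Zp f \<open>Zp < Yp\<close> by simp
    then show False
      using collapsed_roots_impossible \<open>Zp = R1\<close> \<open>Zp < Yp\<close> f Zm_between_R[OF f R0_le_R1]
        Ym_le_R0 Ym_le_Zm Zm_le_Zp by simp
  qed
  moreover have "R1 < Yp"
    using Yp_le_Zp_iff_Yp_le_R1 f R0_le_R1 \<open>Zp < Yp\<close> by simp
  ultimately show ?thesis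
    using Zm_between_R[OF f R0_le_R1] Ym_le_R0 Zm_le_Zp by simp
qed

lemma scenario_classification_nonzero:
  assumes "f \<noteq> 0" and "f \<noteq> 1" and R_order: "0 \<le> f * (R1 - R0)"
  shows "scenario_classification f f10 Zp Zm Yp Ym R0 R1"
proof -
  consider "f < 0" | "0 < f" "f < 1" | "1 < f"
    using assms(1,2) by linarith
  then obtain t where "scen_range t f" and "cond_d t f f10 Zp Zm Yp Ym R0 R1"
  proof cases
    case 1
    then have "R1 \<le> R0"
      using R_order by (simp add: zero_le_mult_iff)
    with 1 show ?thesis
      using that[of S2] cond_d_S2_if_neg by simp
  next
    case 2
    then have "R0 \<le> R1"
      using R_order by (simp add: zero_le_mult_iff)
    with 2 show ?thesis
      using that[of S3a] that[of S4a] cond_d_S3a_if_Yp_le_Zp cond_d_S4a_if_Zp_lt_Yp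
      by (cases "Yp \<le> Zp") simp_all
  next
    case 3
    then have "R0 \<le> R1"
      using R_order by (simp add: zero_le_mult_iff)
    with 3 show ?thesis
      using that[of S3b] that[of S4b] cond_d_S3b_if_Yp_le_Zp cond_d_S4b_if_Zp_lt_Yp
      by (cases "Yp \<le> Zp") simp_all
  qed
  with assms(1) show ?thesis
    by (rule scenario_classification_if_cond_d)
qed

end

lemma scenario_classification_if_identity:
  assumes "f \<noteq> 1" and "f \<noteq> 0 \<Longrightarrow> 0 \<le> f * (R1 - R0)" and "f = 0 \<Longrightarrow> 0 \<le> - f10"
    and "\<And>x. pZ Zp Zm x - pY f Yp Ym x = pR f f10 R0 R1 x"
  shows "scenario_classification f f10 Zp Zm Yp Ym R0 R1"
proof (cases "f = 0")
  case True
  then show ?thesis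
    using scenario_classification_zero[of f10] assms(3,4) by (simp add: pZ_def pY_def pR_def)
next
  case False
  then show ?thesis
    using scenario_classification_nonzero[of f] assms(1,2,4) by (simp add: pZ_def pY_def pR_def)
qed

end

theorem lemma6p7:
  fixes Zp Zm Yp Ym R0 R1 f20 f10 :: real
  assumes "f20 \<noteq> 1" and "Zm \<le> Zp" and "Ym \<le> Yp"
    and "f20 \<noteq> 0 \<Longrightarrow> 0 \<le> f20 * (R1 - R0)"
    and "f20 = 0 \<Longrightarrow> 0 \<le> - f10"
  shows
    "((\<lambda>x. pZ Zp Zm x - pY f20 Yp Ym x) = pR f20 f10 R0 R1 \<longleftrightarrow>
        (Zp * Zm + (f20 - 1) * Yp * Ym = (if f20 \<noteq> 0 then f20 * R0 * R1 else - f10 * R0) \<and>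
         (Zp + Zm) + (f20 - 1) * (Yp + Ym) = (if f20 \<noteq> 0 then f20 * (R0 + R1) else - f10)))
     \<and>
     ((\<lambda>x. pZ Zp Zm x - pY f20 Yp Ym x) = pR f20 f10 R0 R1 \<and>
      Ym \<le> Zm \<and> Zm \<le> Yp \<and> Ym \<le> R0 \<and> R0 \<le> Yp \<longrightarrow>
        (\<exists>s. scen_range s f20 \<and> cond_a s Zp Zm Yp Ym) \<and>
        (\<forall>s. scen_range s f20 \<longrightarrow>
           (cond_a s Zp Zm Yp Ym \<longleftrightarrow> cond_b s f20 f10 Yp Ym R0 R1) \<and>
           (cond_a s Zp Zm Yp Ym \<longleftrightarrow> cond_c s f20 f10 Zp Zm R0 R1) \<and>
           (cond_a s Zp Zm Yp Ym \<longleftrightarrow> cond_d s f20 f10 Zp Zm Yp Ym R0 R1)))"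
proof -
  have "scenario_classification f20 f10 Zp Zm Yp Ym R0 R1"
    if "(\<lambda>x. pZ Zp Zm x - pY f20 Yp Ym x) = pR f20 f10 R0 R1"
      and "Ym \<le> Zm" and "Zm \<le> Yp" and "Ym \<le> R0" and "R0 \<le> Yp"
    using that(2-5) assms(1,2,4,5) that(1)
    by (intro scenario_classification_if_identity) (simp_all add: fun_eq_iff)
  then show ?thesis
    unfolding scenario_classification_def using pZ_minus_pY_eq_pR_iff by blast
qed

end
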